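(* Let $t>0$ be an integer. There is a constant $C_t$ such that the following holds. Let $G=(A\cup B,E,<)$ be a bipartite ordered graph with parts $A,B$ such that $A<B$. If there are no $t$-element subsets $A'\subseteq A$ and $B'\subseteq B$ such that every $a\in A'$ and $b\in B'$ form a double cherry in $G$, then $|E|\le C_t(|A|+|B|)$.
   Context: An ordered graph is a graph with a linear order on its vertices. $A<B$ means $a<b$ for all $a\in A$, $b\in B$. Two distinct vertices of an ordered graph form a double cherry if either they are adjacent, or they can be named $u,v$ so that there are vertices $u_1,u_2,v_1,v_2$ with $u_1<u<u_2<v_1<v<v_2$ and edges $(u,v_1),(u,v_2),(v,u_1),(v,u_2)$ in the graph. *)

theory Defs
  imports Complex_Main
begin

text \<open>An ordered graph: vertices are natural numbers (any finite linear order embeds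
  order-preservingly into nat), edges are 2-element sets of vertices.\<close>

definition adj :: "nat set set \<Rightarrow> nat \<Rightarrow> nat \<Rightarrow> bool" where
  "adj E x y \<longleftrightarrow> {x, y} \<in> E"

definition double_cherry_uv :: "nat set set \<Rightarrow> nat \<Rightarrow> nat \<Rightarrow> bool" where
  "double_cherry_uv E u v \<longleftrightarrow>
     (\<exists>u1 u2 v1 v2. u1 < u \<and> u < u2 \<and> u2 < v1 \<and> v1 < v \<and> v < v2 \<and>
        adj E u v1 \<and> adj E u v2 \<and> adj E v u1 \<and> adj E v u2)"

definition double_cherry :: "nat set set \<Rightarrow> nat \<Rightarrow> nat \<Rightarrow> bool" where
  "double_cherry E x y \<longleftrightarrow> x \<noteq> y \<and>
     (adj E x y \<or> double_cherry_uv E x y \<or> double_cherry_uv E y x)"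

definition bip_ordered_graph :: "nat set \<Rightarrow> nat set \<Rightarrow> nat set set \<Rightarrow> bool" where
  "bip_ordered_graph A B E \<longleftrightarrow> finite A \<and> finite B \<and>
     (\<forall>a\<in>A. \<forall>b\<in>B. a < b) \<and>
     (\<forall>e\<in>E. \<exists>a\<in>A. \<exists>b\<in>B. e = {a, b})"

end

(*
  For b in B let Z(b) consist of the vertices a in A whose right neighbours lie on both sides of b
  and which lie between the least and the largest left neighbour of b. The extreme neighbours
  show that every a in Z(b) forms a double cherry with b, and Z(b) contains all neighbours of b.

  Call a run of t consecutive elements of a set a window; a k-set has at least k - t + 1 windows,
  so deg b <= t - 1 + #windows(Z(b)). A window of Z(b) is a window of Z(b') for fewer than t
  vertices b', since otherwise these form a K_{t,t} of double cherries. Finally every window of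
  Z(b) is a window of the family of neighbourhood spans [min N(a), max N(a)] stabbed by b;
  charging each such window to the first point at which it appears shows that there are at most
  (2t + 1)|A| of them. Hence |E| <= (t - 1)|B| + (t - 1)(2t + 1)|A|.
*)

theory Submission
  imports Defs
begin

definition convex_in :: "'a::linorder set \<Rightarrow> 'a set \<Rightarrow> bool" where
  "convex_in W S \<longleftrightarrow> W \<subseteq> S \<and> (\<forall>s\<in>S. \<forall>u\<in>W. \<forall>v\<in>W. u \<le> s \<and> s \<le> v \<longrightarrow> s \<in> W)"

definition windows :: "nat \<Rightarrow> 'a::linorder set \<Rightarrow> 'a set set" where
  "windows t S = {W. card W = t \<and> convex_in W S}"

lemma windows_subset_Pow: "windows t S \<subseteq> Pow S"
  by (auto simp: windows_def convex_in_def)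

lemma finite_windows: "finite S \<Longrightarrow> finite (windows t S)"
  using finite_subset[OF windows_subset_Pow] by blast

lemma windowD:
  assumes "W \<in> windows t S" and "0 < t"
  shows "finite W" "W \<noteq> {}" "W \<subseteq> S" "card W = t"
  using assms by (auto simp: windows_def convex_in_def card_gt_0_iff)

lemma window_mem_if_between:
  assumes "W \<in> windows t S" "s \<in> S" "u \<in> W" "v \<in> W" "u \<le> s" "s \<le> v"
  shows "s \<in> W"
  using assms by (auto simp: windows_def convex_in_def)

lemma windows_mono_convex:
  assumes "convex_in S T" shows "windows t S \<subseteq> windows t T"
proof
  fix W assume "W \<in> windows t S"
  then have W: "convex_in W S" "card W = t" by (auto simp: windows_def)
  have between: "s \<in> W" if "s \<in> T" "u \<in> W" "v \<in> W" "u \<le> s" "s \<le> v" for s u v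
  proof -
    have "s \<in> S" using assms W(1) that unfolding convex_in_def by (meson subsetD)
    then show ?thesis using W(1) that unfolding convex_in_def by blast
  qed
  have "W \<subseteq> S" "S \<subseteq> T" using W(1) assms unfolding convex_in_def by simp_all
  with between have "convex_in W T" unfolding convex_in_def by blast
  with W(2) show "W \<in> windows t T" by (simp add: windows_def)
qed

lemma window_subset_if_Min_eq:
  assumes "0 < t" "W1 \<in> windows t S" "W2 \<in> windows t S"
    and "Min W1 = Min W2" "Max W1 \<le> Max W2"
  shows "W1 \<subseteq> W2"
proof
  fix x assume x: "x \<in> W1"
  note W1 = windowD[OF assms(2,1)] and W2 = windowD[OF assms(3,1)]
  have "x \<in> S" using x W1(3) by blast
  moreover have "Min W2 \<in> W2" "Max W2 \<in> W2" using W2(1,2) by simp_all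
  moreover have "Min W2 \<le> x" using Min_le[OF W1(1) x] assms(4) by simp
  moreover have "x \<le> Max W2" using Max_ge[OF W1(1) x] assms(5) by (rule order_trans)
  ultimately show "x \<in> W2" by (rule window_mem_if_between[OF assms(3)])
qed

lemma inj_on_Min_windows:
  assumes "0 < t" shows "inj_on Min (windows t S)"
proof (rule inj_onI)
  fix W1 W2 assume W: "W1 \<in> windows t S" "W2 \<in> windows t S" "Min W1 = Min W2"
  have card: "card W1 = card W2" and fin: "finite W1" "finite W2"
    using windowD[OF W(1) assms] windowD[OF W(2) assms] by auto
  show "W1 = W2"
  proof (cases "Max W1 \<le> Max W2")
    case True
    with window_subset_if_Min_eq[OF assms W] show ?thesis
      using card_subset_eq[OF fin(2) _ card] by blast
  next
    case False
    with window_subset_if_Min_eq[OF assms W(2,1) W(3)[symmetric]] show ?thesis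
      using card_subset_eq[OF fin(1) _ card[symmetric]] by simp
  qed
qed

lemma card_windows_le:
  assumes "finite S" "0 < t" shows "card (windows t S) \<le> card S"
proof (rule card_inj_on_le[OF inj_on_Min_windows[OF assms(2)] _ assms(1)])
  show "Min ` windows t S \<subseteq> S"
  proof
    fix m assume "m \<in> Min ` windows t S"
    then obtain W where "W \<in> windows t S" "m = Min W" by blast
    with windowD[OF this(1) assms(2)] show "m \<in> S" by (metis Min_in subsetD)
  qed
qed

text \<open>A window whose span contains c starts at some u with at most t elements of S in [u, c].\<close>

lemma card_windows_spanning_le:
  assumes "finite S" "0 < t"
  shows "card {W \<in> windows t S. Min W \<le> c \<and> c \<le> Max W} \<le> t"
proof -
  let ?U = "{u \<in> S. u \<le> c \<and> card (S \<inter> {u..c}) \<le> t}"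
  have "card ?U \<le> t"
  proof (cases "?U = {}")
    case False
    then have "Min ?U \<in> ?U" using assms(1) by (intro Min_in) auto
    moreover have "?U \<subseteq> S \<inter> {Min ?U..c}" using assms(1) by (auto intro: Min_le)
    then have "card ?U \<le> card (S \<inter> {Min ?U..c})" using assms(1) by (intro card_mono) auto
    ultimately show ?thesis by simp
  qed (simp only: card.empty)
  moreover have "Min ` {W \<in> windows t S. Min W \<le> c \<and> c \<le> Max W} \<subseteq> ?U"
  proof
    fix m assume "m \<in> Min ` {W \<in> windows t S. Min W \<le> c \<and> c \<le> Max W}"
    then obtain W where W: "W \<in> windows t S" "Min W \<le> c" "c \<le> Max W" and m: "m = Min W"
      by blast
    note W_facts = windowD[OF W(1) assms(2)]
    have "S \<inter> {Min W..c} \<subseteq> W"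
    proof
      fix s assume s: "s \<in> S \<inter> {Min W..c}"
      have "Min W \<in> W" "Max W \<in> W" using W_facts(1,2) by simp_all
      moreover have "s \<le> Max W" using s W(3) order_trans by auto
      ultimately show "s \<in> W"
        using s window_mem_if_between[OF W(1)] by simp
    qed
    then have "card (S \<inter> {Min W..c}) \<le> t"
      using card_mono[OF W_facts(1)] W_facts(4) by simp
    moreover have "Min W \<in> S" using W_facts by (metis Min_in subsetD)
    ultimately show "m \<in> ?U" using W(2) m by simp
  qed
  then have "card {W \<in> windows t S. Min W \<le> c \<and> c \<le> Max W} \<le> card ?U"
    using assms(1) by (intro card_inj_on_le[OF inj_on_subset[OF inj_on_Min_windows[OF assms(2)]]]) auto
  ultimately show ?thesis by simp
qed

lemma ex_upper_set_card:
  fixes S :: "'a::linorder set"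
  assumes "finite S" "0 < t" "t \<le> card S"
  shows "\<exists>c. card {s \<in> S. c \<le> s} = t"
  using assms
proof (induction S arbitrary: t rule: finite_linorder_max_induct)
  case (insert b S)
  have b_notin: "b \<notin> S" using insert.hyps(2) by blast
  show ?case
  proof (cases "t = 1")
    case True
    have "{s \<in> insert b S. b \<le> s} = {b}" using insert.hyps(2) by force
    then have "card {s \<in> insert b S. b \<le> s} = t" using True by simp
    then show ?thesis ..
  next
    case False
    then have "0 < t - 1" "t - 1 \<le> card S"
      using insert.prems insert.hyps(1) b_notin by auto
    then obtain c where c: "card {s \<in> S. c \<le> s} = t - 1" using insert.IH by blast
    then have "{s \<in> S. c \<le> s} \<noteq> {}" using \<open>0 < t - 1\<close> by (metis card.empty less_irrefl)
    then obtain s where "s \<in> S" "c \<le> s" by blast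
    then have "c \<le> b" using insert.hyps(2) by (meson less_imp_le order_trans)
    then have "{s \<in> insert b S. c \<le> s} = insert b {s \<in> S. c \<le> s}" by auto
    then have "card {s \<in> insert b S. c \<le> s} = t"
      using c insert.hyps(1) b_notin \<open>0 < t - 1\<close> by simp
    then show ?thesis ..
  qed
qed simp

lemma card_le_card_windows:
  fixes S :: "'a::linorder set"
  assumes "finite S" "0 < t"
  shows "card S \<le> (t - 1) + card (windows t S)"
  using assms
proof (induction S rule: finite_linorder_max_induct)
  case (insert b S)
  have b_notin: "b \<notin> S" using insert.hyps(2) by blast
  show ?case
  proof (cases "card (insert b S) \<le> t - 1")
    case False
    then have "t \<le> card (insert b S)" by linarith
    then obtain c where c: "card {s \<in> insert b S. c \<le> s} = t"
      using ex_upper_set_card[of "insert b S" t] insert.hyps(1) insert.prems by auto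
    let ?top = "{s \<in> insert b S. c \<le> s}"
    have "?top \<noteq> {}" using c insert.prems by (metis card.empty less_irrefl)
    then have "c \<le> b" using insert.hyps(2) by (auto intro: less_imp_le order_trans)
    have "convex_in ?top (insert b S)"
      unfolding convex_in_def by (blast intro: order_trans)
    with c have "?top \<in> windows t (insert b S)" by (simp add: windows_def)
    moreover have "?top \<notin> windows t S"
      using \<open>c \<le> b\<close> b_notin windows_subset_Pow by blast
    moreover have "convex_in S (insert b S)"
      using insert.hyps(2) unfolding convex_in_def by (auto simp: not_le[symmetric])
    then have "windows t S \<subseteq> windows t (insert b S)" by (rule windows_mono_convex)
    ultimately have "Suc (card (windows t S)) \<le> card (windows t (insert b S))"
      using finite_windows[of "insert b S"] insert.hyps(1)
      by (metis card_insert_disjoint card_mono finite_insert finite_windows insert_subset)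
    then show ?thesis using insert.IH insert.prems insert.hyps(1) b_notin by simp
  qed simp
qed simp

definition stabbed :: "'a set \<Rightarrow> ('a \<Rightarrow> nat) \<Rightarrow> ('a \<Rightarrow> nat) \<Rightarrow> nat \<Rightarrow> 'a set" where
  "stabbed I L R x = {i \<in> I. L i \<le> x \<and> x \<le> R i}"

text \<open>Look at the least x at which W is a window. Unless x = 0, passing from x - 1 to x either
  added some w \<in> W, so L w = x, or removed some s lying between two elements of W, so R s = x - 1.\<close>

lemma window_stabbed_cases:
  fixes I :: "'a::linorder set"
  assumes "0 < t" and W: "W \<in> windows t (stabbed I L R x)"
  obtains "W \<in> windows t (stabbed I L R 0)"
  | w where "w \<in> I" "W \<in> windows t (stabbed I L R (L w))" "Min W \<le> w" "w \<le> Max W"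
  | s where "s \<in> I" "W \<in> windows t (stabbed I L R (Suc (R s)))" "Min W \<le> s" "s \<le> Max W"
proof -
  define x0 where "x0 = (LEAST x. W \<in> windows t (stabbed I L R x))"
  have W0: "W \<in> windows t (stabbed I L R x0)"
    unfolding x0_def by (rule LeastI[of _ x]) (rule W)
  note W0_facts = windowD[OF W0 assms(1)]
  have conv: "convex_in W (stabbed I L R x0)" using W0 by (simp add: windows_def)
  have span: "Min W \<le> z" "z \<le> Max W" if "z \<in> W" for z
    using W0_facts(1) that by simp_all
  show thesis
  proof (cases x0)
    case 0
    with W0 show thesis using that(1) by simp
  next
    case (Suc y)
    then have "W \<notin> windows t (stabbed I L R y)"
      using not_less_Least[of y "\<lambda>x. W \<in> windows t (stabbed I L R x)"] x0_def by auto
    then have "\<not> convex_in W (stabbed I L R y)" using W0_facts(4) by (simp add: windows_def)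
    then consider (entered) w where "w \<in> W" "w \<notin> stabbed I L R y"
      | (left) s u v where "s \<in> stabbed I L R y" "u \<in> W" "v \<in> W" "u \<le> s" "s \<le> v" "s \<notin> W"
      unfolding convex_in_def by blast
    then show thesis
    proof cases
      case entered
      then have "w \<in> stabbed I L R x0" using conv by (auto simp: convex_in_def)
      with entered Suc have "w \<in> I" "L w = x0" by (auto simp: stabbed_def)
      with W0 span[OF entered(1)] show thesis using that(2) by simp
    next
      case left
      then have "s \<notin> stabbed I L R x0" using conv unfolding convex_in_def by blast
      with left Suc have "s \<in> I" "Suc (R s) = x0" by (auto simp: stabbed_def)
      moreover have "Min W \<le> s" "s \<le> Max W"
        using span[OF left(2)] span[OF left(3)] left(4,5) by (blast intro: order_trans)+
      ultimately show thesis using W0 that(3) by simp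
    qed
  qed
qed

lemma card_windows_stabbed_le:
  fixes I :: "'a::linorder set"
  assumes "finite I" "0 < t"
  shows "card (\<Union>x. windows t (stabbed I L R x)) \<le> (2 * t + 1) * card I"
proof -
  let ?win = "\<lambda>x. windows t (stabbed I L R x)"
  let ?spanning = "\<lambda>x c. {W \<in> ?win x. Min W \<le> c \<and> c \<le> Max W}"
  let ?Q0 = "?win 0" and ?QL = "\<Union>w\<in>I. ?spanning (L w) w"
    and ?QR = "\<Union>s\<in>I. ?spanning (Suc (R s)) s"
  have fin_stabbed: "finite (stabbed I L R x)" for x
    using assms(1) by (simp add: stabbed_def)
  have fin_win: "finite (?win x)" for x by (rule finite_windows[OF fin_stabbed])
  have "(\<Union>x. ?win x) \<subseteq> ?Q0 \<union> ?QL \<union> ?QR"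
  proof
    fix W assume "W \<in> (\<Union>x. ?win x)"
    then obtain x where "W \<in> ?win x" by blast
    then show "W \<in> ?Q0 \<union> ?QL \<union> ?QR"
      by (rule window_stabbed_cases[OF assms(2)]) blast+
  qed
  then have "card (\<Union>x. ?win x) \<le> card (?Q0 \<union> ?QL \<union> ?QR)"
    using assms(1) fin_win by (intro card_mono) auto
  also have "\<dots> \<le> card ?Q0 + card ?QL + card ?QR"
    by (meson card_Un_le add_right_mono order_trans)
  also have "\<dots> \<le> card I + t * card I + t * card I"
  proof (intro add_mono)
    have "card ?Q0 \<le> card (stabbed I L R 0)" by (rule card_windows_le[OF fin_stabbed assms(2)])
    also have "\<dots> \<le> card I" using assms(1) by (intro card_mono) (auto simp: stabbed_def)
    finally show "card ?Q0 \<le> card I" .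
    have "card ?QL \<le> (\<Sum>w\<in>I. card (?spanning (L w) w))" by (rule card_UN_le[OF assms(1)])
    also have "\<dots> \<le> (\<Sum>w\<in>I. t)"
      by (intro sum_mono card_windows_spanning_le[OF fin_stabbed assms(2)])
    finally show "card ?QL \<le> t * card I" by (simp add: mult.commute)
    have "card ?QR \<le> (\<Sum>s\<in>I. card (?spanning (Suc (R s)) s))" by (rule card_UN_le[OF assms(1)])
    also have "\<dots> \<le> (\<Sum>s\<in>I. t)"
      by (intro sum_mono card_windows_spanning_le[OF fin_stabbed assms(2)])
    finally show "card ?QR \<le> t * card I" by (simp add: mult.commute)
  qed
  finally show ?thesis by (simp add: algebra_simps)
qed

locale ordered_bipartite =
  fixes A B :: "nat set" and E :: "nat set set"
  assumes bip_ordered_graph: "bip_ordered_graph A B E"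
begin

lemma finite_A: "finite A" and finite_B: "finite B"
  and A_less_B: "a \<in> A \<Longrightarrow> b \<in> B \<Longrightarrow> a < b"
  and edge_between: "e \<in> E \<Longrightarrow> \<exists>a\<in>A. \<exists>b\<in>B. e = {a, b}"
  using bip_ordered_graph by (auto simp: bip_ordered_graph_def)

definition right_nbrs :: "nat \<Rightarrow> nat set" where
  "right_nbrs a = {b \<in> B. {a, b} \<in> E}"

definition left_nbrs :: "nat \<Rightarrow> nat set" where
  "left_nbrs b = {a \<in> A. {a, b} \<in> E}"

lemma finite_right_nbrs: "finite (right_nbrs a)"
  using finite_B by (simp add: right_nbrs_def)

lemma finite_left_nbrs: "finite (left_nbrs b)"
  using finite_A by (simp add: left_nbrs_def)

text \<open>The guards on nonempty neighbourhoods keep the unspecified values of Min and Max on the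
  empty set out of the definitions.\<close>

definition straddling :: "nat \<Rightarrow> nat set" where
  "straddling = stabbed {a \<in> A. right_nbrs a \<noteq> {}} (\<lambda>a. Min (right_nbrs a)) (\<lambda>a. Max (right_nbrs a))"

definition cherry_zone :: "nat \<Rightarrow> nat set" where
  "cherry_zone b = {a \<in> straddling b.
     left_nbrs b \<noteq> {} \<and> Min (left_nbrs b) \<le> a \<and> a \<le> Max (left_nbrs b)}"

lemma cherry_zone_subset: "cherry_zone b \<subseteq> A"
  by (auto simp: cherry_zone_def straddling_def stabbed_def)

lemma finite_cherry_zone: "finite (cherry_zone b)"
  using finite_subset[OF cherry_zone_subset finite_A] .

lemma left_nbrs_subset_cherry_zone:
  assumes "b \<in> B" shows "left_nbrs b \<subseteq> cherry_zone b"
proof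
  fix a assume a: "a \<in> left_nbrs b"
  then have "b \<in> right_nbrs a" using assms by (simp add: left_nbrs_def right_nbrs_def)
  then have "a \<in> straddling b"
    using a finite_right_nbrs by (auto simp: straddling_def stabbed_def left_nbrs_def)
  with a finite_left_nbrs show "a \<in> cherry_zone b" by (auto simp: cherry_zone_def)
qed

lemma convex_in_cherry_zone: "convex_in (cherry_zone b) (straddling b)"
  unfolding convex_in_def cherry_zone_def by (blast intro: order_trans)

text \<open>The extreme right neighbours of a and the extreme left neighbours of b witness the
  double cherry; if one of them coincides with b or a, the pair is an edge.\<close>

lemma double_cherry_if_in_cherry_zone:
  assumes b: "b \<in> B" and a: "a \<in> cherry_zone b"
  shows "double_cherry E a b"
proof -
  define b1 where "b1 = Min (right_nbrs a)"
  define b2 where "b2 = Max (right_nbrs a)"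
  define a1 where "a1 = Min (left_nbrs b)"
  define a2 where "a2 = Max (left_nbrs b)"
  have ne: "right_nbrs a \<noteq> {}" "left_nbrs b \<noteq> {}" and aA: "a \<in> A"
    and between: "b1 \<le> b" "b \<le> b2" "a1 \<le> a" "a \<le> a2"
    using a by (auto simp: cherry_zone_def straddling_def stabbed_def b1_def b2_def a1_def a2_def)
  have "b1 \<in> right_nbrs a" "b2 \<in> right_nbrs a" "a1 \<in> left_nbrs b" "a2 \<in> left_nbrs b"
    using ne finite_right_nbrs finite_left_nbrs by (simp_all add: b1_def b2_def a1_def a2_def)
  then have edges: "adj E a b1" "adj E a b2" "adj E b a1" "adj E b a2" "b1 \<in> B" "a2 \<in> A"
    by (auto simp: right_nbrs_def left_nbrs_def adj_def insert_commute)
  have "a < b" using A_less_B[OF aA b] .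
  show ?thesis
  proof (cases "b = b1 \<or> b = b2 \<or> a = a1 \<or> a = a2")
    case True
    then have "adj E a b" using edges by (auto simp: adj_def insert_commute)
    with \<open>a < b\<close> show ?thesis by (simp add: double_cherry_def)
  next
    case False
    with between have "a1 < a" "a < a2" "b1 < b" "b < b2" by auto
    moreover have "a2 < b1" using A_less_B[OF edges(6,5)] .
    ultimately have "double_cherry_uv E a b"
      unfolding double_cherry_uv_def using edges(1-4) by blast
    with \<open>a < b\<close> show ?thesis by (simp add: double_cherry_def)
  qed
qed

lemma card_edges_le_sum_left_nbrs: "card E \<le> (\<Sum>b\<in>B. card (left_nbrs b))"
proof -
  have "E \<subseteq> (\<Union>b\<in>B. (\<lambda>a. {a, b}) ` left_nbrs b)"
  proof
    fix e assume e: "e \<in> E"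
    then obtain a b where "a \<in> A" "b \<in> B" "e = {a, b}" using edge_between by blast
    with e show "e \<in> (\<Union>b\<in>B. (\<lambda>a. {a, b}) ` left_nbrs b)" by (auto simp: left_nbrs_def)
  qed
  then have "card E \<le> card (\<Union>b\<in>B. (\<lambda>a. {a, b}) ` left_nbrs b)"
    using finite_B finite_left_nbrs by (intro card_mono) auto
  also have "\<dots> \<le> (\<Sum>b\<in>B. card ((\<lambda>a. {a, b}) ` left_nbrs b))" by (rule card_UN_le[OF finite_B])
  also have "\<dots> \<le> (\<Sum>b\<in>B. card (left_nbrs b))" by (intro sum_mono card_image_le finite_left_nbrs)
  finally show ?thesis .
qed

definition double_cherry_biclique :: "nat \<Rightarrow> bool" where
  "double_cherry_biclique t \<longleftrightarrow> (\<exists>A' B'. A' \<subseteq> A \<and> B' \<subseteq> B \<and> card A' = t \<and> card B' = t \<and>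
     (\<forall>a\<in>A'. \<forall>b\<in>B'. double_cherry E a b))"

lemma card_owners_less:
  assumes "\<not> double_cherry_biclique t" "W \<subseteq> A" "card W = t"
  shows "card {b \<in> B. W \<in> windows t (cherry_zone b)} < t"
proof (rule ccontr)
  assume "\<not> card {b \<in> B. W \<in> windows t (cherry_zone b)} < t"
  then obtain B' where B': "B' \<subseteq> {b \<in> B. W \<in> windows t (cherry_zone b)}" "card B' = t"
    by (meson not_less obtain_subset_with_card_n)
  have "double_cherry E a b" if "a \<in> W" "b \<in> B'" for a b
  proof -
    have "b \<in> B" "W \<subseteq> cherry_zone b" using B'(1) \<open>b \<in> B'\<close> windows_subset_Pow by blast+
    with \<open>a \<in> W\<close> show ?thesis by (blast intro: double_cherry_if_in_cherry_zone)
  qed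
  with assms B' show False unfolding double_cherry_biclique_def by blast
qed

theorem card_edges_le_if_no_double_cherry_biclique:
  assumes t: "0 < t" and no_biclique: "\<not> double_cherry_biclique t"
  shows "card E \<le> t * (2 * t + 1) * (card A + card B)"
proof -
  let ?zw = "\<lambda>b. windows t (cherry_zone b)"
  define Win where "Win = (\<Union>b\<in>B. ?zw b)"
  have fin_Win: "finite Win"
    unfolding Win_def using finite_B finite_windows[OF finite_cherry_zone] by blast
  have "Win \<subseteq> (\<Union>x. windows t (straddling x))"
    unfolding Win_def using windows_mono_convex[OF convex_in_cherry_zone] by blast
  moreover have "finite (\<Union>x. windows t (straddling x))"
  proof (rule finite_subset[OF _ finite_Pow_iff[THEN iffD2, OF finite_A]])
    show "(\<Union>x. windows t (straddling x)) \<subseteq> Pow A"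
      using windows_subset_Pow by (fastforce simp: straddling_def stabbed_def)
  qed
  ultimately have "card Win \<le> card (\<Union>x. windows t (straddling x))" by (rule card_mono[rotated])
  also have "\<dots> \<le> (2 * t + 1) * card {a \<in> A. right_nbrs a \<noteq> {}}"
    unfolding straddling_def using finite_A t by (intro card_windows_stabbed_le) simp_all
  also have "\<dots> \<le> (2 * t + 1) * card A" using finite_A by (intro mult_le_mono2 card_mono) auto
  finally have card_Win: "card Win \<le> (2 * t + 1) * card A" .
  have owners: "card {b \<in> B. W \<in> ?zw b} \<le> t - 1" if "W \<in> Win" for W
  proof -
    from that obtain b where "W \<in> ?zw b" by (auto simp: Win_def)
    with windowD[OF this t] cherry_zone_subset have "W \<subseteq> A" "card W = t" by blast+
    then have "card {b \<in> B. W \<in> ?zw b} < t" by (rule card_owners_less[OF no_biclique])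
    then show ?thesis by simp
  qed
  have double_count: "(\<Sum>b\<in>B. card (?zw b)) = (\<Sum>W\<in>Win. card {b \<in> B. W \<in> ?zw b})"
  proof -
    have "?zw b = {W \<in> Win. W \<in> ?zw b}" if "b \<in> B" for b using that by (auto simp: Win_def)
    then have "(\<Sum>b\<in>B. card (?zw b)) = (\<Sum>b\<in>B. card {W \<in> Win. W \<in> ?zw b})" by simp
    also have "\<dots> = (\<Sum>W\<in>Win. card {b \<in> B. W \<in> ?zw b})"
      by (rule sum_multicount_gen[OF finite_B fin_Win]) simp
    finally show ?thesis .
  qed
  have "card E \<le> (\<Sum>b\<in>B. card (left_nbrs b))" by (rule card_edges_le_sum_left_nbrs)
  also have "\<dots> \<le> (\<Sum>b\<in>B. (t - 1) + card (?zw b))"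
  proof (rule sum_mono)
    fix b assume "b \<in> B"
    then have "card (left_nbrs b) \<le> card (cherry_zone b)"
      by (intro card_mono finite_cherry_zone left_nbrs_subset_cherry_zone)
    also have "\<dots> \<le> (t - 1) + card (?zw b)" by (rule card_le_card_windows[OF finite_cherry_zone t])
    finally show "card (left_nbrs b) \<le> (t - 1) + card (?zw b)" .
  qed
  also have "\<dots> = (t - 1) * card B + (\<Sum>W\<in>Win. card {b \<in> B. W \<in> ?zw b})"
    by (simp add: sum.distrib double_count mult.commute)
  also have "\<dots> \<le> (t - 1) * card B + (t - 1) * card Win"
    using sum_mono[OF owners] by (simp add: mult.commute)
  also have "\<dots> \<le> t * (2 * t + 1) * card B + t * ((2 * t + 1) * card A)"
    using card_Win by (intro add_mono mult_mono) auto
  also have "\<dots> = t * (2 * t + 1) * (card A + card B)" by (simp add: algebra_simps)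
  finally show ?thesis .
qed

end

theorem corollary3p2:
  fixes t :: nat
  assumes "t > 0"
  shows "\<exists>C::real. \<forall>A B E. bip_ordered_graph A B E \<longrightarrow>
           \<not> (\<exists>A' B'. A' \<subseteq> A \<and> B' \<subseteq> B \<and> card A' = t \<and> card B' = t \<and>
                 (\<forall>a\<in>A'. \<forall>b\<in>B'. double_cherry E a b)) \<longrightarrow>
           real (card E) \<le> C * real (card A + card B)"
proof (intro exI[of _ "real (t * (2 * t + 1))"] allI impI)
  fix A B :: "nat set" and E :: "nat set set"
  assume "bip_ordered_graph A B E"
  then interpret ordered_bipartite A B E by unfold_locales
  assume "\<not> (\<exists>A' B'. A' \<subseteq> A \<and> B' \<subseteq> B \<and> card A' = t \<and> card B' = t \<and>
                 (\<forall>a\<in>A'. \<forall>b\<in>B'. double_cherry E a b))"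
  then have "card E \<le> t * (2 * t + 1) * (card A + card B)"
    using assms by (intro card_edges_le_if_no_double_cherry_biclique) (simp_all add: double_cherry_biclique_def)
  then show "real (card E) \<le> real (t * (2 * t + 1)) * real (card A + card B)"
    by (metis of_nat_le_iff of_nat_mult)
qed

end
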